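(* Let $X$ be a compact metric space, $f_1,f_2:X\to X$ continuous and $F=\{f_1,f_2\}$. Suppose $F$ has the (Hausdorff metric) shadowing property. Then $F$ is chain mixing if and only if $F$ is mixing.
   Context: Throughout, $(X,d)$ is a compact metric space, $\mathbb{N}=\{0,1,2,\dots\}$, $\mathbb{Z}^+=\{1,2,\dots\}$. $\mathbb{K}(X)$ is the set of nonempty compact subsets of $X$ with the Hausdorff metric $d_H(A,B)=\max\{\sup_{a\in A}\inf_{b\in B}d(a,b),\sup_{b\in B}\inf_{a\in A}d(a,b)\}$; a point $x$ is identified with $\{x\}$. Multiple mappings: $F=\{f_1,f_2\}$ maps $x$ to $F(x)=\{f_1(x),f_2(x)\}$; for $n\ge1$, $F^n(x)=\{f_{i_1}\cdots f_{i_n}(x): i_1,\dots,i_n\in\{1,2\}\}$, $F^0(x)=\{x\}$; for $A\in\mathbb{K}(X)$, $F^n(A)=\bigcup_{a\in A}F^n(a)$. Let $Ran(F)=\{F^n(x): n\ge1, x\in X\}\subset\mathbb{K}(X)$, with the topology induced by $d_H$. Shadowing: a sequence $\{A_n\}_{n\ge0}\subset\mathbb{K}(X)$ with $A_0$ a singleton is a $\delta$-pseudo orbit of $F$ if $d_H(F(A_n),A_{n+1})\le\delta$ for all $n\in\mathbb{N}$. $F$ has the shadowing property if for every $\epsilon>0$ there is $\delta>0$ such that for every $\delta$-pseudo orbit $\{A_n\}$ there is $y\in X$ with $d_H(F^n(y),A_n)<\epsilon$ for all $n\in\mathbb{N}$. A $\delta$-chain of $F$ from $x\in X$ to $A\in\mathbb{K}(X)$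 of length $m$ is a finite sequence $A_0=\{x\},A_1,\dots,A_m=A$ in $\mathbb{K}(X)$ with $d_H(F(A_i),A_{i+1})\le\delta$ for $0\le i<m$. $F$ is mixing if for all nonempty open $U\subset X$ and nonempty open $\mathcal U\subset Ran(F)$ there is $N\in\mathbb{Z}^+$ such that $\{F^n(u):u\in U\}\cap\mathcal U\ne\emptyset$ for all $n\ge N$. $F$ is chain mixing if for all $x\in X$, $A\in Ran(F)$ and $\delta>0$ there is $N\in\mathbb{Z}^+$ such that for every $n\ge N$ there is a $\delta$-chain of $F$ from $x$ to $A$ of length $n$. *)

theory Defs
  imports "HOL-Analysis.Analysis"
begin

text \<open>Hausdorff distance (used only on nonempty compact sets, where the suprema are attained).\<close>
definition hdist :: "'a::metric_space set \<Rightarrow> 'a set \<Rightarrow> real" where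
  "hdist A B = max (SUP a\<in>A. infdist a B) (SUP b\<in>B. infdist b A)"

definition KX :: "'a::metric_space set \<Rightarrow> 'a set set" where
  "KX X = {A. A \<noteq> {} \<and> compact A \<and> A \<subseteq> X}"

definition Fimg :: "('a \<Rightarrow> 'a) \<Rightarrow> ('a \<Rightarrow> 'a) \<Rightarrow> 'a set \<Rightarrow> 'a set" where
  "Fimg f1 f2 A = f1 ` A \<union> f2 ` A"

definition Fpow :: "('a \<Rightarrow> 'a) \<Rightarrow> ('a \<Rightarrow> 'a) \<Rightarrow> nat \<Rightarrow> 'a set \<Rightarrow> 'a set" where
  "Fpow f1 f2 n A = (Fimg f1 f2 ^^ n) A"

definition Ran :: "'a set \<Rightarrow> ('a \<Rightarrow> 'a) \<Rightarrow> ('a \<Rightarrow> 'a) \<Rightarrow> 'a set set" where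
  "Ran X f1 f2 = {Fpow f1 f2 n {x} | n x. n \<ge> 1 \<and> x \<in> X}"

definition open_in_Ran :: "'a::metric_space set \<Rightarrow> ('a \<Rightarrow> 'a) \<Rightarrow> ('a \<Rightarrow> 'a) \<Rightarrow> 'a set set \<Rightarrow> bool" where
  "open_in_Ran X f1 f2 \<U> \<longleftrightarrow> \<U> \<subseteq> Ran X f1 f2 \<and>
     (\<forall>A\<in>\<U>. \<exists>e>0. \<forall>B\<in>Ran X f1 f2. hdist A B < e \<longrightarrow> B \<in> \<U>)"

definition pseudo_orbit :: "'a::metric_space set \<Rightarrow> ('a \<Rightarrow> 'a) \<Rightarrow> ('a \<Rightarrow> 'a) \<Rightarrow> real \<Rightarrow> (nat \<Rightarrow> 'a set) \<Rightarrow> bool" where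
  "pseudo_orbit X f1 f2 \<delta> A \<longleftrightarrow> (\<forall>n. A n \<in> KX X) \<and> (\<exists>x. A 0 = {x}) \<and>
     (\<forall>n. hdist (Fimg f1 f2 (A n)) (A (Suc n)) \<le> \<delta>)"

definition has_shadowing :: "'a::metric_space set \<Rightarrow> ('a \<Rightarrow> 'a) \<Rightarrow> ('a \<Rightarrow> 'a) \<Rightarrow> bool" where
  "has_shadowing X f1 f2 \<longleftrightarrow> (\<forall>\<epsilon>>0. \<exists>\<delta>>0. \<forall>A. pseudo_orbit X f1 f2 \<delta> A \<longrightarrow>
     (\<exists>y\<in>X. \<forall>n. hdist (Fpow f1 f2 n {y}) (A n) < \<epsilon>))"

definition is_chain :: "'a::metric_space set \<Rightarrow> ('a \<Rightarrow> 'a) \<Rightarrow> ('a \<Rightarrow> 'a) \<Rightarrow> real \<Rightarrow> 'a \<Rightarrow> 'a set \<Rightarrow> nat \<Rightarrow> (nat \<Rightarrow> 'a set) \<Rightarrow> bool" where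
  "is_chain X f1 f2 \<delta> x A m C \<longleftrightarrow> C 0 = {x} \<and> C m = A \<and> (\<forall>i\<le>m. C i \<in> KX X) \<and>
     (\<forall>i<m. hdist (Fimg f1 f2 (C i)) (C (Suc i)) \<le> \<delta>)"

definition chain_mixing :: "'a::metric_space set \<Rightarrow> ('a \<Rightarrow> 'a) \<Rightarrow> ('a \<Rightarrow> 'a) \<Rightarrow> bool" where
  "chain_mixing X f1 f2 \<longleftrightarrow> (\<forall>x\<in>X. \<forall>A\<in>Ran X f1 f2. \<forall>\<delta>>0. \<exists>N\<ge>1. \<forall>n\<ge>N.
     \<exists>C. is_chain X f1 f2 \<delta> x A n C)"

definition mixing :: "'a::metric_space set \<Rightarrow> ('a \<Rightarrow> 'a) \<Rightarrow> ('a \<Rightarrow> 'a) \<Rightarrow> bool" where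
  "mixing X f1 f2 \<longleftrightarrow> (\<forall>U \<U>. openin (top_of_set X) U \<and> U \<noteq> {} \<and>
     open_in_Ran X f1 f2 \<U> \<and> \<U> \<noteq> {} \<longrightarrow>
     (\<exists>N\<ge>1. \<forall>n\<ge>N. \<exists>u\<in>U. Fpow f1 f2 n {u} \<in> \<U>))"

end

theory Submission
  imports Defs
begin

text \<open>
  Mixing implies chain mixing without shadowing: if the open set of points near \<open>x\<close> has some
  point \<open>u\<close> whose \<open>n\<close>-th image \<open>F\<^sup>n(u)\<close> is \<open>\<delta>\<close>-close to \<open>A\<close>, then
  \<open>{x}, F(u), \<dots>, F\<^sup>n\<^sup>-\<^sup>1(u), A\<close> is a \<open>\<delta>\<close>-chain, the first step being small by continuity of
  \<open>F\<close>. Conversely, a \<open>\<delta>\<close>-chain from \<open>x\<close> to \<open>A \<in> Ran(F)\<close>, continued by the true orbit of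
  \<open>A\<close>, is a \<open>\<delta>\<close>-pseudo orbit; a point \<open>y\<close> shadowing it within \<open>\<epsilon>\<close> lies near \<open>x\<close> and has
  \<open>F\<^sup>n(y)\<close> near \<open>A\<close>, which gives mixing.
\<close>

lemma Fpow_0 [simp]: "Fpow f1 f2 0 A = A"
  by (simp add: Fpow_def)

lemma Fpow_Suc: "Fpow f1 f2 (Suc n) A = Fimg f1 f2 (Fpow f1 f2 n A)"
  by (simp add: Fpow_def)

lemma Fimg_singleton: "Fimg f1 f2 {x} = {f1 x, f2 x}"
  by (auto simp: Fimg_def)

lemma Fimg_eq_empty_iff [simp]: "Fimg f1 f2 A = {} \<longleftrightarrow> A = {}"
  by (simp add: Fimg_def)

lemma finite_Fpow: "finite A \<Longrightarrow> finite (Fpow f1 f2 n A)"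
  by (induction n) (simp_all add: Fpow_Suc Fimg_def)

lemma Fpow_eq_empty_iff [simp]: "Fpow f1 f2 n A = {} \<longleftrightarrow> A = {}"
  by (induction n) (simp_all add: Fpow_Suc)

lemma Fpow_subset:
  assumes "A \<subseteq> X" "f1 ` X \<subseteq> X" "f2 ` X \<subseteq> X"
  shows "Fpow f1 f2 n A \<subseteq> X"
  using assms by (induction n) (auto simp: Fpow_Suc Fimg_def image_subset_iff)

lemma Fpow_in_KX:
  assumes "finite A" "A \<in> KX X" "f1 ` X \<subseteq> X" "f2 ` X \<subseteq> X"
  shows "Fpow f1 f2 n A \<in> KX X"
  using assms finite_Fpow[OF assms(1)] Fpow_subset[of A X]
  by (simp add: KX_def finite_imp_compact)

lemma Fpow_in_Ran: "1 \<le> n \<Longrightarrow> x \<in> X \<Longrightarrow> Fpow f1 f2 n {x} \<in> Ran X f1 f2"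
  unfolding Ran_def by blast

lemma finite_Ran: "B \<in> Ran X f1 f2 \<Longrightarrow> finite B"
  by (auto simp: Ran_def intro: finite_Fpow)

lemma Ran_subset_KX:
  assumes "f1 ` X \<subseteq> X" "f2 ` X \<subseteq> X"
  shows "Ran X f1 f2 \<subseteq> KX X"
proof
  fix B assume "B \<in> Ran X f1 f2"
  then obtain n x where "B = Fpow f1 f2 n {x}" "x \<in> X"
    by (auto simp: Ran_def)
  moreover have "{x} \<in> KX X"
    using \<open>x \<in> X\<close> by (simp add: KX_def)
  ultimately show "B \<in> KX X"
    using assms by (simp add: Fpow_in_KX)
qed

lemma hdist_commute: "hdist A B = hdist B A"
  by (simp add: hdist_def max.commute)

lemma hdist_refl: "A \<noteq> {} \<Longrightarrow> hdist A A = 0"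
  by (simp add: hdist_def)

lemma hdist_singletons [simp]: "hdist {x} {y} = dist x y"
  by (simp add: hdist_def dist_commute)

lemma hdist_leI:
  fixes A B :: "'a::metric_space set"
  assumes "A \<noteq> {}" "B \<noteq> {}"
    and "\<And>a. a \<in> A \<Longrightarrow> \<exists>b\<in>B. dist a b \<le> r" and "\<And>b. b \<in> B \<Longrightarrow> \<exists>a\<in>A. dist b a \<le> r"
  shows "hdist A B \<le> r"
  using assms unfolding hdist_def
  by (auto intro!: cSUP_least intro: order_trans[OF infdist_le])

lemma infdist_le_hdist:
  fixes A B :: "'a::metric_space set"
  assumes "compact A" "a \<in> A"
  shows "infdist a B \<le> hdist A B"
proof -
  have "bdd_above ((\<lambda>a. infdist a B) ` A)"
    using assms(1) by (intro bounded_imp_bdd_above compact_imp_bounded compact_continuous_image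
        continuous_on_infdist continuous_on_id)
  then have "infdist a B \<le> (SUP a\<in>A. infdist a B)"
    using assms(2) by (rule cSUP_upper2) simp
  then show ?thesis
    by (simp add: hdist_def)
qed

lemma infdist_le_hdist_add:
  fixes A B C :: "'a::metric_space set"
  assumes "compact A" "compact B" "B \<noteq> {}" "a \<in> A"
  shows "infdist a C \<le> hdist A B + hdist B C"
proof -
  have "infdist a C - hdist B C \<le> infdist a B"
    unfolding infdist_notempty[OF assms(3)]
  proof (rule cINF_greatest)
    fix b assume "b \<in> B"
    have "infdist b C \<le> hdist B C"
      using assms(2) \<open>b \<in> B\<close> by (rule infdist_le_hdist)
    with infdist_triangle[of a C b] show "infdist a C - hdist B C \<le> dist a b"
      by simp
  qed fact
  moreover have "infdist a B \<le> hdist A B"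
    using assms(1,4) by (rule infdist_le_hdist)
  ultimately show ?thesis
    by simp
qed

lemma hdist_triangle:
  fixes A B C :: "'a::metric_space set"
  assumes "compact A" "compact B" "compact C" "A \<noteq> {}" "B \<noteq> {}" "C \<noteq> {}"
  shows "hdist A C \<le> hdist A B + hdist B C"
proof -
  have "(SUP a\<in>A. infdist a C) \<le> hdist A B + hdist B C"
    using assms by (intro cSUP_least) (auto intro: infdist_le_hdist_add)
  moreover have "(SUP c\<in>C. infdist c A) \<le> hdist C B + hdist B A"
    using assms by (intro cSUP_least) (auto intro: infdist_le_hdist_add)
  ultimately show ?thesis
    by (simp add: hdist_def hdist_commute[of C B] hdist_commute[of B A])
qed

lemma Fimg_singleton_continuous:
  assumes "continuous_on X f1" "continuous_on X f2" "x \<in> X" "\<delta> > 0"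
  obtains \<eta> where "\<eta> > 0"
    and "\<And>u. u \<in> X \<Longrightarrow> dist u x < \<eta> \<Longrightarrow> hdist (Fimg f1 f2 {x}) (Fimg f1 f2 {u}) \<le> \<delta>"
proof -
  obtain \<eta>1 where "\<eta>1 > 0" and \<eta>1: "\<And>u. u \<in> X \<Longrightarrow> dist u x < \<eta>1 \<Longrightarrow> dist (f1 u) (f1 x) < \<delta>"
    using assms(1,3,4) unfolding continuous_on_iff by blast
  obtain \<eta>2 where "\<eta>2 > 0" and \<eta>2: "\<And>u. u \<in> X \<Longrightarrow> dist u x < \<eta>2 \<Longrightarrow> dist (f2 u) (f2 x) < \<delta>"
    using assms(2,3,4) unfolding continuous_on_iff by blast
  have "hdist (Fimg f1 f2 {x}) (Fimg f1 f2 {u}) \<le> \<delta>" if "u \<in> X" "dist u x < min \<eta>1 \<eta>2" for u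
    using \<eta>1[of u] \<eta>2[of u] that unfolding Fimg_singleton
    by (intro hdist_leI) (auto simp: dist_commute)
  with \<open>\<eta>1 > 0\<close> \<open>\<eta>2 > 0\<close> show ?thesis
    by (intro that[of "min \<eta>1 \<eta>2"]) auto
qed

lemma open_in_Ran_hdist_ball:
  assumes "A \<in> Ran X f1 f2" "f1 ` X \<subseteq> X" "f2 ` X \<subseteq> X"
  shows "open_in_Ran X f1 f2 {B \<in> Ran X f1 f2. hdist A B < r}"
  unfolding open_in_Ran_def
proof (intro conjI ballI)
  fix B assume "B \<in> {B \<in> Ran X f1 f2. hdist A B < r}"
  then have B: "B \<in> Ran X f1 f2" "hdist A B < r"
    by simp_all
  have compact_nonempty: "compact C \<and> C \<noteq> {}" if "C \<in> Ran X f1 f2" for C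
    using that Ran_subset_KX[OF assms(2,3)] by (auto simp: KX_def)
  show "\<exists>e>0. \<forall>B'\<in>Ran X f1 f2. hdist B B' < e \<longrightarrow> B' \<in> {B \<in> Ran X f1 f2. hdist A B < r}"
  proof (intro exI[of _ "r - hdist A B"] conjI ballI impI)
    fix B' assume B': "B' \<in> Ran X f1 f2" "hdist B B' < r - hdist A B"
    have "hdist A B' \<le> hdist A B + hdist B B'"
      using compact_nonempty[OF assms(1)] compact_nonempty[OF B(1)] compact_nonempty[OF B'(1)]
      by (intro hdist_triangle) auto
    with B' show "B' \<in> {B \<in> Ran X f1 f2. hdist A B < r}"
      by simp
  qed (use B in simp)
qed auto

lemma is_chain_via_orbit:
  assumes "x \<in> X" "u \<in> X" "A \<in> KX X" "2 \<le> n" "f1 ` X \<subseteq> X" "f2 ` X \<subseteq> X"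
    and first_step: "hdist (Fimg f1 f2 {x}) (Fimg f1 f2 {u}) \<le> \<delta>"
    and last_step: "hdist (Fpow f1 f2 n {u}) A \<le> \<delta>"
    and "\<delta> \<ge> 0"
  shows "is_chain X f1 f2 \<delta> x A n (\<lambda>i. if i = 0 then {x} else if i < n then Fpow f1 f2 i {u} else A)"
    (is "is_chain X f1 f2 \<delta> x A n ?C")
  unfolding is_chain_def
proof (intro conjI allI impI)
  fix i
  show "?C i \<in> KX X" if "i \<le> n"
    using assms Fpow_in_KX[of "{u}" X] by (auto simp: KX_def)
  show "hdist (Fimg f1 f2 (?C i)) (?C (Suc i)) \<le> \<delta>" if "i < n"
  proof -
    consider "i = 0" | "0 < i" "Suc i < n" | "0 < i" "Suc i = n"
      using \<open>i < n\<close> by linarith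
    then show ?thesis
    proof cases
      case 1
      with first_step \<open>2 \<le> n\<close> show ?thesis
        by (simp add: Fpow_Suc)
    next
      case 2
      then show ?thesis
        using hdist_refl[of "Fpow f1 f2 (Suc i) {u}"] \<open>\<delta> \<ge> 0\<close> by (simp add: Fpow_Suc)
    next
      case 3
      with last_step show ?thesis
        by (auto simp: Fpow_Suc simp del: Fpow_0)
    qed
  qed
qed (use \<open>2 \<le> n\<close> in auto)

lemma pseudo_orbit_chain_then_orbit:
  assumes chain: "is_chain X f1 f2 \<delta> x A n C"
    and "finite A" "\<delta> \<ge> 0" "f1 ` X \<subseteq> X" "f2 ` X \<subseteq> X"
  shows "pseudo_orbit X f1 f2 \<delta> (\<lambda>j. if j \<le> n then C j else Fpow f1 f2 (j - n) A)"
    (is "pseudo_orbit X f1 f2 \<delta> ?D")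
proof -
  have C0: "C 0 = {x}" and Cn: "C n = A" and CK: "\<And>i. i \<le> n \<Longrightarrow> C i \<in> KX X"
    and C_step: "\<And>i. i < n \<Longrightarrow> hdist (Fimg f1 f2 (C i)) (C (Suc i)) \<le> \<delta>"
    using chain unfolding is_chain_def by auto
  have orbit: "?D j = Fpow f1 f2 (j - n) A" if "n \<le> j" for j
    using that Cn by auto
  have DK: "?D j \<in> KX X" for j
    using CK[of j] Fpow_in_KX[OF \<open>finite A\<close> CK[of n, unfolded Cn] assms(4,5)] by auto
  have "hdist (Fimg f1 f2 (?D j)) (?D (Suc j)) \<le> \<delta>" for j
  proof (cases "j < n")
    case True
    then show ?thesis
      using C_step[of j] by simp
  next
    case False
    then have "?D (Suc j) = Fimg f1 f2 (?D j)"
      by (simp add: orbit Suc_diff_le Fpow_Suc Cn)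
    moreover have "?D (Suc j) \<noteq> {}"
      using DK[of "Suc j"] by (simp add: KX_def)
    ultimately show ?thesis
      using hdist_refl[of "?D (Suc j)"] \<open>\<delta> \<ge> 0\<close> by simp
  qed
  with DK C0 show ?thesis
    unfolding pseudo_orbit_def by auto
qed

lemma mixing_imp_chain_mixing:
  assumes "continuous_on X f1" "continuous_on X f2" "f1 ` X \<subseteq> X" "f2 ` X \<subseteq> X"
    and "mixing X f1 f2"
  shows "chain_mixing X f1 f2"
  unfolding chain_mixing_def
proof (intro ballI allI impI)
  fix x A and \<delta> :: real
  assume x: "x \<in> X" and A: "A \<in> Ran X f1 f2" and "\<delta> > 0"
  obtain \<eta> where "\<eta> > 0"
    and \<eta>: "\<And>u. u \<in> X \<Longrightarrow> dist u x < \<eta> \<Longrightarrow> hdist (Fimg f1 f2 {x}) (Fimg f1 f2 {u}) \<le> \<delta>"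
    using Fimg_singleton_continuous[OF assms(1,2) x \<open>\<delta> > 0\<close>] by blast
  define U where "U = X \<inter> ball x \<eta>"
  define \<U> where "\<U> = {B \<in> Ran X f1 f2. hdist A B < \<delta>}"
  have AK: "A \<in> KX X"
    using A Ran_subset_KX[OF assms(3,4)] by blast
  have "openin (top_of_set X) U" "U \<noteq> {}"
    using x \<open>\<eta> > 0\<close> by (auto simp: U_def openin_open_Int)
  moreover have "open_in_Ran X f1 f2 \<U>" "\<U> \<noteq> {}"
    using open_in_Ran_hdist_ball[OF A assms(3,4)] A AK hdist_refl[of A] \<open>\<delta> > 0\<close>
    by (auto simp: \<U>_def KX_def)
  ultimately obtain N where "\<forall>n\<ge>N. \<exists>u\<in>U. Fpow f1 f2 n {u} \<in> \<U>"
    using assms(5) unfolding mixing_def by blast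
  have "\<exists>C. is_chain X f1 f2 \<delta> x A n C" if n: "max N 2 \<le> n" for n
  proof -
    obtain u where "u \<in> U" "Fpow f1 f2 n {u} \<in> \<U>"
      using \<open>\<forall>n\<ge>N. _\<close> n by auto
    then have "u \<in> X" "dist u x < \<eta>" "hdist (Fpow f1 f2 n {u}) A \<le> \<delta>"
      by (auto simp: U_def \<U>_def dist_commute hdist_commute)
    then show ?thesis
      using is_chain_via_orbit[OF x _ AK _ assms(3,4) \<eta>] n \<open>\<delta> > 0\<close> by auto
  qed
  then show "\<exists>N\<ge>1. \<forall>n\<ge>N. \<exists>C. is_chain X f1 f2 \<delta> x A n C"
    by (intro exI[of _ "max N 2"]) auto
qed

lemma chain_mixing_imp_mixing:
  assumes "f1 ` X \<subseteq> X" "f2 ` X \<subseteq> X" "has_shadowing X f1 f2" "chain_mixing X f1 f2"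
  shows "mixing X f1 f2"
  unfolding mixing_def
proof (intro allI impI)
  fix U \<U>
  assume "openin (top_of_set X) U \<and> U \<noteq> {} \<and> open_in_Ran X f1 f2 \<U> \<and> \<U> \<noteq> {}"
  then have U: "openin (top_of_set X) U" "U \<noteq> {}" and \<U>: "open_in_Ran X f1 f2 \<U>" "\<U> \<noteq> {}"
    by auto
  obtain x where x: "x \<in> U" "x \<in> X"
    using U openin_imp_subset by blast
  obtain e1 where "e1 > 0" and e1: "\<And>y. y \<in> X \<Longrightarrow> dist y x < e1 \<Longrightarrow> y \<in> U"
    using U(1) x(1) unfolding openin_euclidean_subtopology_iff by blast
  obtain A where A: "A \<in> \<U>" "A \<in> Ran X f1 f2"
    using \<U> by (auto simp: open_in_Ran_def)
  obtain e2 where "e2 > 0" and e2: "\<And>B. B \<in> Ran X f1 f2 \<Longrightarrow> hdist A B < e2 \<Longrightarrow> B \<in> \<U>"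
    using \<U>(1) A(1) unfolding open_in_Ran_def by blast
  have "min e1 e2 > 0"
    using \<open>e1 > 0\<close> \<open>e2 > 0\<close> by simp
  then obtain \<delta> where "\<delta> > 0" and shadow: "\<And>D. pseudo_orbit X f1 f2 \<delta> D \<Longrightarrow>
      \<exists>y\<in>X. \<forall>n. hdist (Fpow f1 f2 n {y}) (D n) < min e1 e2"
    using assms(3) unfolding has_shadowing_def by blast
  obtain N where "N \<ge> 1" and N: "\<forall>n\<ge>N. \<exists>C. is_chain X f1 f2 \<delta> x A n C"
    using assms(4) x(2) A(2) \<open>\<delta> > 0\<close> unfolding chain_mixing_def by blast
  have "\<exists>u\<in>U. Fpow f1 f2 n {u} \<in> \<U>" if n: "N \<le> n" for n
  proof -
    obtain C where C: "is_chain X f1 f2 \<delta> x A n C"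
      using N n by blast
    have C0: "C 0 = {x}" and Cn: "C n = A"
      using C by (simp_all add: is_chain_def)
    obtain y where "y \<in> X"
      and y: "\<And>j. hdist (Fpow f1 f2 j {y}) (if j \<le> n then C j else Fpow f1 f2 (j - n) A) < min e1 e2"
      using shadow[OF pseudo_orbit_chain_then_orbit[OF C finite_Ran[OF A(2)] _ assms(1,2)]]
        \<open>\<delta> > 0\<close> by auto
    have "y \<in> U"
      using y[of 0] C0 \<open>y \<in> X\<close> by (intro e1) auto
    moreover have "Fpow f1 f2 n {y} \<in> \<U>"
      using y[of n] Cn Fpow_in_Ran[of n y X] \<open>N \<ge> 1\<close> n \<open>y \<in> X\<close>
      by (intro e2) (auto simp: hdist_commute)
    ultimately show ?thesis ..
  qed
  with \<open>N \<ge> 1\<close> show "\<exists>N\<ge>1. \<forall>n\<ge>N. \<exists>u\<in>U. Fpow f1 f2 n {u} \<in> \<U>"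
    by blast
qed

theorem theorem5p1:
  fixes X :: "'a::metric_space set" and f1 f2 :: "'a \<Rightarrow> 'a"
  assumes "compact X"
    and "continuous_on X f1" and "f1 ` X \<subseteq> X"
    and "continuous_on X f2" and "f2 ` X \<subseteq> X"
    and "has_shadowing X f1 f2"
  shows "chain_mixing X f1 f2 \<longleftrightarrow> mixing X f1 f2"
  using chain_mixing_imp_mixing[OF assms(3,5,6)] mixing_imp_chain_mixing[OF assms(2,4,3,5)]
  by blast

end
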